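(* Let $1\le t<k\le n$. Suppose the user, wanting file $f_i$, forms the queries as the shares $\mathbf{q}_1,\dots,\mathbf{q}_n$ of an $(n,k,t)$ linear communication efficient secret sharing scheme whose secret is $\mathbf{s}=(\mathbf{e}'_1,\dots,\mathbf{e}'_{\alpha'})$, and server $j$, when asked for a linear combination $\sum_c \lambda_c \mathbf{q}_{j,c}$ of its sub-shares, returns $\big(\sum_c\lambda_c\mathbf{q}_{j,c}\big)^T\mathbf{x}$. Then the resulting scheme is a universally robust PIR: for every $T$ with $|T|=t$ the distribution of $(\mathbf{q}_j)_{j\in T}$ does not depend on $i$, and for every $\mu$ with $k\le\mu\le n$ and every set $A$ of $\mu$ servers, the user retrieves $f_i$ from the responses of the servers in $A$ while downloading in total $\mu\alpha'/(\mu-t)$ symbols, so that the rate equals $1-t/\mu=C(t,\mu)$ simultaneously for all $\mu\in\{k,\dots,n\}$.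
   Context: Setting: $m$ files are replicated on $n$ servers over a finite field $GF(q)$. Fix a positive integer $\alpha$ divisible by $\mu-t$ for every $\mu\in\{k,\dots,n\}$... more precisely such that $\alpha'/(\mu-t)$ is an integer for all such $\mu$, where $\alpha'=(k-t)\alpha$. Each file consists of $\alpha'$ symbols and the data is $\mathbf{x}\in GF(q)^{\alpha' m}$ with $f_i=[x_i,x_{m+i},\dots,x_{(\alpha'-1)m+i}]$; $\mathbf{e}_p$ is the $p$-th standard basis vector of $GF(q)^{\alpha' m}$ and $\mathbf{e}'_j=\mathbf{e}_{(j-1)m+i}$, so $f_i=[\mathbf{e}_1'^T\mathbf{x},\dots,\mathbf{e}_{\alpha'}'^T\mathbf{x}]$. An $(n,k,t)$ linear communication efficient secret sharing scheme encodes a secret $\mathbf{s}=(s_1,\dots,s_{\alpha'})$ (vectors in $GF(q)^{\alpha' m}$) into $n$ shares, share $j$ consisting of $\alpha$ sub-shares $\mathbf{q}_{j,1},\dots,\mathbf{q}_{j,\alpha}$, each a fixed $GF(q)$-linear combination of the $s_l$ and of random vectors drawn i.i.d. uniformly and independently of the secret, such that: (perfect secrecy) the joint distribution of any $t$ shares is independent of the secret; and (communication efficiency) for every $d$ with $k\le d\le n$ and every set $A$ of $d$ shares, the secret can be recovered by a fixed linear map from $\alpha'/(d-t)$ fixed $GF(q)$-linear combinations of the sub-shares of each share in $A$, i.e. from $d\alpha'/(d-t)$ downloaded symbols in total (the optimal amount). The rate of a PIR scheme is the number of file symbols divided by the number of downloaded symbols; $C(t,\mu)=1-t/\mu$ is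 the asymptotic PIR capacity with $t$ colluding and $\mu$ responding servers. *)

theory Defs
  imports "HOL-Probability.Probability"
begin

(* Conventions: indices are 0-based.  Vectors of GF(q)^N are functions nat => 'a
   that are extensional on {..<N}.  Servers are 0..<n, sub-shares 0..<alpha,
   secret components 0..<alpha', random vectors 0..<rho, files 0..<m. *)

definition vecs :: "nat \<Rightarrow> (nat \<Rightarrow> 'a) set" where
  "vecs N = PiE {..<N} (\<lambda>_. UNIV)"

definition rand_space :: "nat \<Rightarrow> nat \<Rightarrow> (nat \<Rightarrow> nat \<Rightarrow> 'a) set" where
  "rand_space \<rho> N = PiE {..<\<rho>} (\<lambda>_. vecs N)"

definition secret_space :: "nat \<Rightarrow> nat \<Rightarrow> (nat \<Rightarrow> nat \<Rightarrow> 'a) set" where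
  "secret_space \<alpha>' N = PiE {..<\<alpha>'} (\<lambda>_. vecs N)"

definition subshare ::
  "nat \<Rightarrow> nat \<Rightarrow> nat \<Rightarrow> (nat \<Rightarrow> nat \<Rightarrow> nat \<Rightarrow> 'a::field) \<Rightarrow> (nat \<Rightarrow> nat \<Rightarrow> nat \<Rightarrow> 'a)
   \<Rightarrow> (nat \<Rightarrow> nat \<Rightarrow> 'a) \<Rightarrow> (nat \<Rightarrow> nat \<Rightarrow> 'a) \<Rightarrow> nat \<Rightarrow> nat \<Rightarrow> (nat \<Rightarrow> 'a)" where
  "subshare \<alpha>' \<rho> N a b s r j c =
     restrict (\<lambda>p. (\<Sum>l<\<alpha>'. a j c l * s l p) + (\<Sum>v<\<rho>. b j c v * r v p)) {..<N}"

definition share ::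
  "nat \<Rightarrow> nat \<Rightarrow> nat \<Rightarrow> nat \<Rightarrow> (nat \<Rightarrow> nat \<Rightarrow> nat \<Rightarrow> 'a::field) \<Rightarrow> (nat \<Rightarrow> nat \<Rightarrow> nat \<Rightarrow> 'a)
   \<Rightarrow> (nat \<Rightarrow> nat \<Rightarrow> 'a) \<Rightarrow> (nat \<Rightarrow> nat \<Rightarrow> 'a) \<Rightarrow> nat \<Rightarrow> (nat \<Rightarrow> nat \<Rightarrow> 'a)" where
  "share \<alpha> \<alpha>' \<rho> N a b s r j = (\<lambda>c\<in>{..<\<alpha>}. subshare \<alpha>' \<rho> N a b s r j c)"

definition shares_on ::
  "nat \<Rightarrow> nat \<Rightarrow> nat \<Rightarrow> nat \<Rightarrow> (nat \<Rightarrow> nat \<Rightarrow> nat \<Rightarrow> 'a::field) \<Rightarrow> (nat \<Rightarrow> nat \<Rightarrow> nat \<Rightarrow> 'a)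
   \<Rightarrow> (nat \<Rightarrow> nat \<Rightarrow> 'a) \<Rightarrow> nat set \<Rightarrow> (nat \<Rightarrow> nat \<Rightarrow> 'a) \<Rightarrow> (nat \<Rightarrow> nat \<Rightarrow> nat \<Rightarrow> 'a)" where
  "shares_on \<alpha> \<alpha>' \<rho> N a b s T r = (\<lambda>j\<in>T. share \<alpha> \<alpha>' \<rho> N a b s r j)"

definition shares_dist ::
  "nat \<Rightarrow> nat \<Rightarrow> nat \<Rightarrow> nat \<Rightarrow> (nat \<Rightarrow> nat \<Rightarrow> nat \<Rightarrow> 'a::{finite,field}) \<Rightarrow> (nat \<Rightarrow> nat \<Rightarrow> nat \<Rightarrow> 'a)
   \<Rightarrow> (nat \<Rightarrow> nat \<Rightarrow> 'a) \<Rightarrow> nat set \<Rightarrow> (nat \<Rightarrow> nat \<Rightarrow> nat \<Rightarrow> 'a) pmf" where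
  "shares_dist \<alpha> \<alpha>' \<rho> N a b s T =
     map_pmf (shares_on \<alpha> \<alpha>' \<rho> N a b s T) (pmf_of_set (rand_space \<rho> N))"

(* (n,k,t) linear communication efficient secret sharing scheme with alpha sub-shares
   per share, secret of alpha' components in GF(q)^N, rho random vectors,
   coefficient tables a, b. *)
definition lin_ce_ss ::
  "nat \<Rightarrow> nat \<Rightarrow> nat \<Rightarrow> nat \<Rightarrow> nat \<Rightarrow> nat \<Rightarrow> nat \<Rightarrow>
   (nat \<Rightarrow> nat \<Rightarrow> nat \<Rightarrow> 'a::{finite,field}) \<Rightarrow> (nat \<Rightarrow> nat \<Rightarrow> nat \<Rightarrow> 'a) \<Rightarrow> bool" where
  "lin_ce_ss n k t \<alpha> \<alpha>' \<rho> N a b \<longleftrightarrow>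
     \<comment> \<open>perfect secrecy\<close>
     (\<forall>T. T \<subseteq> {..<n} \<and> card T = t \<longrightarrow>
        (\<forall>s\<in>secret_space \<alpha>' N. \<forall>s'\<in>secret_space \<alpha>' N.
           shares_dist \<alpha> \<alpha>' \<rho> N a b s T = shares_dist \<alpha> \<alpha>' \<rho> N a b s' T)) \<and>
     \<comment> \<open>communication efficiency: from any d shares, alpha'/(d-t) fixed combinations each\<close>
     (\<forall>d. k \<le> d \<and> d \<le> n \<longrightarrow> (\<forall>A. A \<subseteq> {..<n} \<and> card A = d \<longrightarrow>
        (\<exists>(\<gamma>::nat \<Rightarrow> nat \<Rightarrow> nat \<Rightarrow> 'a) (\<delta>::nat \<Rightarrow> nat \<Rightarrow> nat \<Rightarrow> 'a).
          \<forall>s\<in>secret_space \<alpha>' N. \<forall>r\<in>rand_space \<rho> N. \<forall>l<\<alpha>'.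
            s l = restrict (\<lambda>p. \<Sum>j\<in>A. \<Sum>u<\<alpha>' div (d - t).
                    \<delta> l j u * (\<Sum>c<\<alpha>. \<gamma> j u c * subshare \<alpha>' \<rho> N a b s r j c p)) {..<N})))"

definition evec :: "nat \<Rightarrow> nat \<Rightarrow> (nat \<Rightarrow> 'a::field)" where
  "evec N p = restrict (\<lambda>q. if q = p then 1 else 0) {..<N}"

definition file_secret :: "nat \<Rightarrow> nat \<Rightarrow> nat \<Rightarrow> nat \<Rightarrow> (nat \<Rightarrow> nat \<Rightarrow> 'a::field)" where
  "file_secret \<alpha>' m N i = (\<lambda>l\<in>{..<\<alpha>'}. evec N (l * m + i))"

definition file_of :: "nat \<Rightarrow> nat \<Rightarrow> (nat \<Rightarrow> 'a) \<Rightarrow> nat \<Rightarrow> (nat \<Rightarrow> 'a)" where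
  "file_of \<alpha>' m x i = (\<lambda>l\<in>{..<\<alpha>'}. x (l * m + i))"

definition pir_response ::
  "nat \<Rightarrow> nat \<Rightarrow> nat \<Rightarrow> nat \<Rightarrow> (nat \<Rightarrow> nat \<Rightarrow> nat \<Rightarrow> 'a::field) \<Rightarrow> (nat \<Rightarrow> nat \<Rightarrow> nat \<Rightarrow> 'a)
   \<Rightarrow> (nat \<Rightarrow> nat \<Rightarrow> 'a) \<Rightarrow> (nat \<Rightarrow> nat \<Rightarrow> 'a) \<Rightarrow> nat \<Rightarrow> (nat \<Rightarrow> 'a) \<Rightarrow> (nat \<Rightarrow> 'a) \<Rightarrow> 'a" where
  "pir_response \<alpha> \<alpha>' \<rho> N a b s r j lam x =
     (\<Sum>p<N. (\<Sum>c<\<alpha>. lam c * subshare \<alpha>' \<rho> N a b s r j c p) * x p)"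

definition pir_capacity :: "nat \<Rightarrow> nat \<Rightarrow> real" where
  "pir_capacity t \<mu> = 1 - real t / real \<mu>"

end

theory Submission
  imports Defs
begin

text \<open>Querying with the shares of the secret (e'_1, ..., e'_alpha') hides i because any t shares
  are distributed independently of the secret.  Since a response is linear in the requested
  sub-shares, applying the scheme's linear decoder to the responses of any mu servers yields
  e'_l^T x = x_(l*m+i) for every l, i.e. the file f_i, from alpha'/(mu-t) symbols per server.\<close>

lemma lin_ce_ss_secrecy:
  fixes a b :: "nat \<Rightarrow> nat \<Rightarrow> nat \<Rightarrow> 'a::{finite,field}"
  assumes "lin_ce_ss n k t \<alpha> \<alpha>' \<rho> N a b" "T \<subseteq> {..<n}" "card T = t"
    and "s \<in> secret_space \<alpha>' N" "s' \<in> secret_space \<alpha>' N"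
  shows "shares_dist \<alpha> \<alpha>' \<rho> N a b s T = shares_dist \<alpha> \<alpha>' \<rho> N a b s' T"
  using assms unfolding lin_ce_ss_def by blast

lemma lin_ce_ss_recovery:
  fixes a b :: "nat \<Rightarrow> nat \<Rightarrow> nat \<Rightarrow> 'a::{finite,field}"
  assumes "lin_ce_ss n k t \<alpha> \<alpha>' \<rho> N a b" "k \<le> d" "d \<le> n" "A \<subseteq> {..<n}" "card A = d"
  shows "\<exists>\<gamma> \<delta> :: nat \<Rightarrow> nat \<Rightarrow> nat \<Rightarrow> 'a. \<forall>s\<in>secret_space \<alpha>' N. \<forall>r\<in>rand_space \<rho> N. \<forall>l<\<alpha>'.
           s l = restrict (\<lambda>p. \<Sum>j\<in>A. \<Sum>u<\<alpha>' div (d - t).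
                   \<delta> l j u * (\<Sum>c<\<alpha>. \<gamma> j u c * subshare \<alpha>' \<rho> N a b s r j c p)) {..<N}"
  using conjunct2[OF assms(1)[unfolded lin_ce_ss_def]] assms(2-5) by blast

lemma file_secret_in_secret_space: "file_secret \<alpha>' m N i \<in> secret_space \<alpha>' N"
  unfolding file_secret_def secret_space_def vecs_def evec_def by auto

lemma sum_evec_mult:
  fixes x :: "nat \<Rightarrow> 'a::field"
  assumes "q < N"
  shows "(\<Sum>p<N. evec N q p * x p) = x q"
proof -
  have "(\<Sum>p<N. evec N q p * x p) = (\<Sum>p<N. if p = q then x p else 0)"
    by (intro sum.cong) (auto simp: evec_def)
  also have "\<dots> = x q" using assms by simp
  finally show ?thesis .
qed

lemma file_index_less:
  fixes l i m \<alpha>' :: nat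
  assumes "l < \<alpha>'" "i < m"
  shows "l * m + i < \<alpha>' * m"
proof -
  have "(l + 1) * m \<le> \<alpha>' * m" using assms by (intro mult_le_mono1) simp
  thus ?thesis using assms by simp
qed

lemma sum_pir_response_eq_inner:
  fixes s :: "nat \<Rightarrow> nat \<Rightarrow> 'a::field"
  assumes "s l = restrict (\<lambda>p. \<Sum>j\<in>A. \<Sum>u<D.
                   \<delta> j u * (\<Sum>c<\<alpha>. \<gamma> j u c * subshare \<alpha>' \<rho> N a b s r j c p)) {..<N}"
  shows "(\<Sum>j\<in>A. \<Sum>u<D. \<delta> j u * pir_response \<alpha> \<alpha>' \<rho> N a b s r j (\<gamma> j u) x)
         = (\<Sum>p<N. s l p * x p)"
proof -
  let ?q = "\<lambda>j u p. \<Sum>c<\<alpha>. \<gamma> j u c * subshare \<alpha>' \<rho> N a b s r j c p"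
  have "(\<Sum>j\<in>A. \<Sum>u<D. \<delta> j u * pir_response \<alpha> \<alpha>' \<rho> N a b s r j (\<gamma> j u) x)
      = (\<Sum>j\<in>A. \<Sum>u<D. \<Sum>p<N. \<delta> j u * (?q j u p * x p))"
    unfolding pir_response_def by (simp add: sum_distrib_left)
  also have "\<dots> = (\<Sum>p<N. \<Sum>j\<in>A. \<Sum>u<D. \<delta> j u * (?q j u p * x p))"
    by (simp add: sum.swap[of _ "{..<N}"])
  also have "\<dots> = (\<Sum>p<N. (\<Sum>j\<in>A. \<Sum>u<D. \<delta> j u * ?q j u p) * x p)"
    by (simp add: sum_distrib_right mult.assoc)
  also have "\<dots> = (\<Sum>p<N. s l p * x p)"
    using assms by (intro sum.cong) auto
  finally show ?thesis .
qed

lemma lin_ce_ss_retrieves_file: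
  fixes a b :: "nat \<Rightarrow> nat \<Rightarrow> nat \<Rightarrow> 'a::{finite,field}"
  assumes ss: "lin_ce_ss n k t \<alpha> \<alpha>' \<rho> (\<alpha>' * m) a b"
    and "k \<le> \<mu>" "\<mu> \<le> n" "A \<subseteq> {..<n}" "card A = \<mu>" and i: "i < m"
  shows "\<exists>(lam :: nat \<Rightarrow> nat \<Rightarrow> nat \<Rightarrow> 'a) (Dec :: (nat \<Rightarrow> nat \<Rightarrow> 'a) \<Rightarrow> (nat \<Rightarrow> 'a)).
           \<forall>x. \<forall>r\<in>rand_space \<rho> (\<alpha>' * m).
             Dec (\<lambda>j\<in>A. \<lambda>u\<in>{..<\<alpha>' div (\<mu> - t)}.
                    pir_response \<alpha> \<alpha>' \<rho> (\<alpha>' * m) a b (file_secret \<alpha>' m (\<alpha>' * m) i) r j (lam j u) x)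
             = file_of \<alpha>' m x i"
proof -
  let ?N = "\<alpha>' * m" and ?D = "\<alpha>' div (\<mu> - t)"
  let ?s = "file_secret \<alpha>' m ?N i :: nat \<Rightarrow> nat \<Rightarrow> 'a"
  obtain \<gamma> \<delta> :: "nat \<Rightarrow> nat \<Rightarrow> nat \<Rightarrow> 'a" where dec:
    "\<forall>s\<in>secret_space \<alpha>' ?N. \<forall>r\<in>rand_space \<rho> ?N. \<forall>l<\<alpha>'.
       s l = restrict (\<lambda>p. \<Sum>j\<in>A. \<Sum>u<?D.
               \<delta> l j u * (\<Sum>c<\<alpha>. \<gamma> j u c * subshare \<alpha>' \<rho> ?N a b s r j c p)) {..<?N}"
    using lin_ce_ss_recovery[OF ss assms(2-5)] by blast
  define Dec where "Dec = (\<lambda>R :: nat \<Rightarrow> nat \<Rightarrow> 'a. \<lambda>l\<in>{..<\<alpha>'}. \<Sum>j\<in>A. \<Sum>u<?D. \<delta> l j u * R j u)"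
  have "Dec (\<lambda>j\<in>A. \<lambda>u\<in>{..<?D}. pir_response \<alpha> \<alpha>' \<rho> ?N a b ?s r j (\<gamma> j u) x) = file_of \<alpha>' m x i"
    if r: "r \<in> rand_space \<rho> ?N" for x r
    unfolding Dec_def file_of_def
  proof (rule restrict_ext)
    fix l assume l: "l \<in> {..<\<alpha>'}"
    have "(\<Sum>j\<in>A. \<Sum>u<?D. \<delta> l j u *
             (\<lambda>j\<in>A. \<lambda>u\<in>{..<?D}. pir_response \<alpha> \<alpha>' \<rho> ?N a b ?s r j (\<gamma> j u) x) j u)
        = (\<Sum>j\<in>A. \<Sum>u<?D. \<delta> l j u * pir_response \<alpha> \<alpha>' \<rho> ?N a b ?s r j (\<gamma> j u) x)"
      by (intro sum.cong) auto
    also have "\<dots> = (\<Sum>p<?N. ?s l p * x p)"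
      using l by (intro sum_pir_response_eq_inner dec[rule_format] file_secret_in_secret_space r) auto
    also have "\<dots> = (\<Sum>p<?N. evec ?N (l * m + i) p * x p)"
      using l by (simp add: file_secret_def)
    also have "\<dots> = x (l * m + i)"
      using l i by (intro sum_evec_mult) (auto simp: file_index_less)
    finally show "(\<Sum>j\<in>A. \<Sum>u<?D. \<delta> l j u *
             (\<lambda>j\<in>A. \<lambda>u\<in>{..<?D}. pir_response \<alpha> \<alpha>' \<rho> ?N a b ?s r j (\<gamma> j u) x) j u)
        = x (l * m + i)" .
  qed
  then show ?thesis by blast
qed

lemma download_and_rate:
  fixes \<mu> t \<alpha>' :: nat
  assumes "t < \<mu>" "0 < \<alpha>'" "(\<mu> - t) dvd \<alpha>'"
  shows "real (\<mu> * (\<alpha>' div (\<mu> - t))) = real \<mu> * real \<alpha>' / real (\<mu> - t)"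
    and "real \<alpha>' / real (\<mu> * (\<alpha>' div (\<mu> - t))) = pir_capacity t \<mu>"
proof -
  obtain c where c: "\<alpha>' = (\<mu> - t) * c" using assms(3) by blast
  have pos: "0 < \<mu> - t" using assms(1) by simp
  then have div: "\<alpha>' div (\<mu> - t) = c" using c by simp
  have "0 < c" using c assms(2) by (cases c) auto
  moreover have "real (\<mu> - t) = real \<mu> - real t" using assms(1) by simp
  ultimately show "real (\<mu> * (\<alpha>' div (\<mu> - t))) = real \<mu> * real \<alpha>' / real (\<mu> - t)"
    and "real \<alpha>' / real (\<mu> * (\<alpha>' div (\<mu> - t))) = pir_capacity t \<mu>"
    using pos assms(1) unfolding div c pir_capacity_def by (auto simp: field_simps)
qed

theorem proposition2:
  fixes n k t \<alpha> m \<rho> :: nat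
    and a b :: "nat \<Rightarrow> nat \<Rightarrow> nat \<Rightarrow> 'a::{finite,field}"
  assumes "1 \<le> t" and "t < k" and "k \<le> n" and "0 < \<alpha>"
    and "\<forall>\<mu>\<in>{k..n}. (\<mu> - t) dvd ((k - t) * \<alpha>)"
    and "lin_ce_ss n k t \<alpha> ((k - t) * \<alpha>) \<rho> ((k - t) * \<alpha> * m) a b"
  shows
    "(\<forall>T. T \<subseteq> {..<n} \<and> card T = t \<longrightarrow>
        (\<forall>i<m. \<forall>i'<m.
           shares_dist \<alpha> ((k - t) * \<alpha>) \<rho> ((k - t) * \<alpha> * m) a b
              (file_secret ((k - t) * \<alpha>) m ((k - t) * \<alpha> * m) i) T =
           shares_dist \<alpha> ((k - t) * \<alpha>) \<rho> ((k - t) * \<alpha> * m) a b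
              (file_secret ((k - t) * \<alpha>) m ((k - t) * \<alpha> * m) i') T)) \<and>
     (\<forall>\<mu>. k \<le> \<mu> \<and> \<mu> \<le> n \<longrightarrow> (\<forall>A. A \<subseteq> {..<n} \<and> card A = \<mu> \<longrightarrow> (\<forall>i<m.
        (\<exists>(lam :: nat \<Rightarrow> nat \<Rightarrow> nat \<Rightarrow> 'a) (Dec :: (nat \<Rightarrow> nat \<Rightarrow> 'a) \<Rightarrow> (nat \<Rightarrow> 'a)).
           \<forall>x\<in>vecs ((k - t) * \<alpha> * m). \<forall>r\<in>rand_space \<rho> ((k - t) * \<alpha> * m).
             Dec (\<lambda>j\<in>A. \<lambda>u\<in>{..<((k - t) * \<alpha>) div (\<mu> - t)}.
                    pir_response \<alpha> ((k - t) * \<alpha>) \<rho> ((k - t) * \<alpha> * m) a b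
                      (file_secret ((k - t) * \<alpha>) m ((k - t) * \<alpha> * m) i) r j (lam j u) x)
             = file_of ((k - t) * \<alpha>) m x i) \<and>
        real (card A * (((k - t) * \<alpha>) div (\<mu> - t))) = real \<mu> * real ((k - t) * \<alpha>) / real (\<mu> - t) \<and>
        real ((k - t) * \<alpha>) / real (card A * (((k - t) * \<alpha>) div (\<mu> - t))) = pir_capacity t \<mu>)))"
proof -
  define \<alpha>' where "\<alpha>' = (k - t) * \<alpha>"
  have ss: "lin_ce_ss n k t \<alpha> \<alpha>' \<rho> (\<alpha>' * m) a b" using assms(6) by (simp add: \<alpha>'_def)
  have "0 < \<alpha>'" using assms(2,4) by (simp add: \<alpha>'_def)
  show ?thesis
    unfolding \<alpha>'_def[symmetric]
  proof (intro conjI allI impI ballI; (elim conjE)?)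
    fix T i i' assume "T \<subseteq> {..<n}" "card T = t" "i < m" "i' < m"
    then show "shares_dist \<alpha> \<alpha>' \<rho> (\<alpha>' * m) a b (file_secret \<alpha>' m (\<alpha>' * m) i) T =
               shares_dist \<alpha> \<alpha>' \<rho> (\<alpha>' * m) a b (file_secret \<alpha>' m (\<alpha>' * m) i') T"
      by (intro lin_ce_ss_secrecy[OF ss] file_secret_in_secret_space)
  next
    fix \<mu> A i assume \<mu>: "k \<le> \<mu>" "\<mu> \<le> n" and A: "A \<subseteq> {..<n}" "card A = \<mu>" and "i < m"
    have rate: "t < \<mu>" "(\<mu> - t) dvd \<alpha>'" using \<mu> assms(2,5) by (auto simp: \<alpha>'_def)
    show "\<exists>lam Dec. \<forall>x\<in>vecs (\<alpha>' * m). \<forall>r\<in>rand_space \<rho> (\<alpha>' * m).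
            Dec (\<lambda>j\<in>A. \<lambda>u\<in>{..<\<alpha>' div (\<mu> - t)}.
                   pir_response \<alpha> \<alpha>' \<rho> (\<alpha>' * m) a b (file_secret \<alpha>' m (\<alpha>' * m) i) r j (lam j u) x)
            = file_of \<alpha>' m x i"
      using lin_ce_ss_retrieves_file[OF ss \<mu> A \<open>i < m\<close>] by blast
    show "real (card A * (\<alpha>' div (\<mu> - t))) = real \<mu> * real \<alpha>' / real (\<mu> - t)"
      "real \<alpha>' / real (card A * (\<alpha>' div (\<mu> - t))) = pir_capacity t \<mu>"
      using download_and_rate[OF rate(1) \<open>0 < \<alpha>'\<close> rate(2)] A(2) by simp_all
  qed
qed

end
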